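(* Let $k\ge2$ and let $n$ be a perfect square. Let $\{u,v\}$ be an edge of $G_k$ with $u,v\in H_2$. Then for any two $k$-cliques $K,K'$ of $G_k$ with $u\in K$ and $v\in K'$, we have $K\overset{*}{\leftrightarrow}K'$ in the subgraph of $G_k$ induced by $\mathcal{B}(\{u,v\},k-1)$; that is, there is a sequence of $k$-cliques $K=K_1,K_2,\dots,K_s=K'$, all contained in $\mathcal{B}(\{u,v\},k-1)$, such that $|K_i\cap K_{i+1}|\ge k-1$ for every $i\in[s-1]$.
   Context: $\mathcal{B}(U,T)$ is the set of nodes of $G_k$ at distance at most $T$ from $U$. Let $n$ be a perfect square. $G_2$ is the $(\sqrt n\times\sqrt n)$ simple grid (node set $\{(i,j):i,j\in[\sqrt n]\}$, $(i,j)\sim(i',j')$ iff $|i-i'|+|j-j'|=1$), and $H_2=V(G_2)$. For $k\ge2$, $G_{k+1}$ is obtained from $G_k$ by adding, for each node $u\in V(G_k)$, a new node $u^*$ (the duplicate of $u$) adjacent exactly to $u$ and to all neighbors of $u$ in $G_k$; $H_{k+1}$ is the set of these new nodes, so $V(G_k)=H_2\cup\dots\cup H_k$. *)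

theory Defs
  imports Main
begin

(* Nodes: Grid i j is the grid node (i,j) (in H_2); Dup l u is the duplicate u*
   of the node u of G_(l+2), created when forming G_(l+3). *)
datatype node = Grid nat nat | Dup nat node

(* Level l corresponds to G_(l+2); m = sqrt n. *)
fun gverts :: "nat \<Rightarrow> nat \<Rightarrow> node set" where
  "gverts m 0 = {Grid i j | i j. 1 \<le> i \<and> i \<le> m \<and> 1 \<le> j \<and> j \<le> m}"
| "gverts m (Suc l) = gverts m l \<union> {Dup l u | u. u \<in> gverts m l}"

fun gadj :: "nat \<Rightarrow> nat \<Rightarrow> node \<Rightarrow> node \<Rightarrow> bool" where
  "gadj m 0 x y = (\<exists>i j i' j'. x = Grid i j \<and> y = Grid i' j' \<and>
       x \<in> gverts m 0 \<and> y \<in> gverts m 0 \<and>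
       (if i \<le> i' then i' - i else i - i') + (if j \<le> j' then j' - j else j - j') = 1)"
| "gadj m (Suc l) x y = (gadj m l x y
     \<or> (\<exists>u \<in> gverts m l. x = Dup l u \<and> (y = u \<or> gadj m l u y))
     \<or> (\<exists>u \<in> gverts m l. y = Dup l u \<and> (x = u \<or> gadj m l u x)))"

definition V :: "nat \<Rightarrow> nat \<Rightarrow> node set" where
  "V m k = gverts m (k - 2)"

definition adj :: "nat \<Rightarrow> nat \<Rightarrow> node \<Rightarrow> node \<Rightarrow> bool" where
  "adj m k x y = gadj m (k - 2) x y"

definition H2 :: "nat \<Rightarrow> node set" where
  "H2 m = gverts m 0"

definition edge_rel :: "nat \<Rightarrow> nat \<Rightarrow> (node \<times> node) set" where
  "edge_rel m k = {(x, y). adj m k x y}"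

definition ball :: "nat \<Rightarrow> nat \<Rightarrow> node set \<Rightarrow> nat \<Rightarrow> node set" where
  "ball m k U T = {x \<in> V m k. \<exists>u \<in> U. \<exists>t \<le> T. (u, x) \<in> (edge_rel m k) ^^ t}"

definition is_clique :: "nat \<Rightarrow> nat \<Rightarrow> nat \<Rightarrow> node set \<Rightarrow> bool" where
  "is_clique m k r K \<longleftrightarrow> K \<subseteq> V m k \<and> finite K \<and> card K = r \<and>
     (\<forall>x \<in> K. \<forall>y \<in> K. x \<noteq> y \<longrightarrow> adj m k x y)"

end

theory Submission
  imports Defs
begin

text \<open>
  The grid is bipartite, so cliques of G_2 have at most 2 nodes, and since duplicates made in
  the same step are pairwise non-adjacent, cliques of G_k have at most k nodes. Hence a (k+1)-clique
  of G_(k+1) is a k-clique K0 of G_k together with the duplicate of one of its nodes. By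
  induction on k, any two k-cliques through a grid node u are joined by moves between
  k-cliques through u sharing k - 1 nodes: a move K0 \<rightarrow> K1 of G_k lifts by adding to both
  the duplicate of a common node, and exchanging the duplicated node inside a fixed K0 is a
  single move. Passing through a k-clique containing both u and v connects K to K'; every
  clique on the way contains u or v, so it even lies in the ball of radius 1.
\<close>

lemma gadj_imp_gverts: "gadj m l x y \<Longrightarrow> x \<in> gverts m l \<and> y \<in> gverts m l"
  by (induction l arbitrary: x y) auto

lemma Dup_in_gverts_imp_less: "Dup j z \<in> gverts m l \<Longrightarrow> j < l"
  by (induction l) (auto simp: less_Suc_eq)

lemma Dup_notin_gverts: "Dup l z \<notin> gverts m l"
  using Dup_in_gverts_imp_less by blast

lemma gverts_zero_subset: "gverts m 0 \<subseteq> gverts m l"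
  by (induction l) auto

lemma gverts_Suc_diff: "x \<in> gverts m (Suc l) - gverts m l \<Longrightarrow> \<exists>y \<in> gverts m l. x = Dup l y"
  by auto

lemma gadj_Suc_iff_old:
  "x \<in> gverts m l \<Longrightarrow> y \<in> gverts m l \<Longrightarrow> gadj m (Suc l) x y \<longleftrightarrow> gadj m l x y"
  using Dup_notin_gverts by auto

lemma gadj_Suc_Dup_iff:
  "z \<in> gverts m l \<Longrightarrow> gadj m (Suc l) (Dup l y) z \<longleftrightarrow> y \<in> gverts m l \<and> (z = y \<or> gadj m l y z)"
proof -
  assume z: "z \<in> gverts m l"
  have "\<not> gadj m l (Dup l y) z" and "\<not> gadj m l z (Dup l y)"
    using gadj_imp_gverts Dup_notin_gverts by blast+
  with z show ?thesis using Dup_notin_gverts by auto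
qed

lemma not_gadj_Dup_Dup: "\<not> gadj m (Suc l) (Dup l y) (Dup l z)"
  by (auto dest!: gadj_imp_gverts simp: Dup_notin_gverts)

lemma gadj_sym: "gadj m l x y \<Longrightarrow> gadj m l y x"
proof (induction l arbitrary: x y)
  case 0
  then obtain i j i' j' where "x = Grid i j" "y = Grid i' j'" "x \<in> gverts m 0" "y \<in> gverts m 0"
    "(if i \<le> i' then i' - i else i - i') + (if j \<le> j' then j' - j else j - j') = 1"
    by auto
  then show ?case by (simp only: gadj.simps) (auto split: if_splits)
next
  case (Suc l)
  then show ?case unfolding gadj.simps(2) by blast
qed

lemma gadj_grid_iff:
  "x \<in> gverts m 0 \<Longrightarrow> y \<in> gverts m 0 \<Longrightarrow> gadj m l x y \<longleftrightarrow> gadj m 0 x y"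
  by (induction l) (use gverts_zero_subset gadj_Suc_iff_old in blast)+

declare gadj.simps [simp del]

fun checkerboard :: "node \<Rightarrow> bool" where
  "checkerboard (Grid i j) = even (i + j)"
| "checkerboard (Dup l u) = False"

lemma gadj_zero_checkerboard: "gadj m 0 x y \<Longrightarrow> checkerboard x \<noteq> checkerboard y"
proof -
  assume "gadj m 0 x y"
  then obtain i j i' j' where "x = Grid i j" "y = Grid i' j'"
    and "(if i \<le> i' then i' - i else i - i') + (if j \<le> j' then j' - j else j - j') = 1"
    by (auto simp: gadj.simps)
  moreover from this(3) have "(i' = Suc i \<or> i = Suc i') \<and> j = j' \<or> i = i' \<and> (j' = Suc j \<or> j = Suc j')"
    by (auto split: if_splits)
  ultimately show ?thesis by auto
qed

lemma card_gverts_Suc_diff_le_1: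
  assumes "S \<subseteq> gverts m (Suc l)" "finite S" "pairwise (gadj m (Suc l)) S"
  shows "card (S - gverts m l) \<le> 1"
proof -
  have "a = b" if a: "a \<in> S - gverts m l" and b: "b \<in> S - gverts m l" for a b
  proof -
    obtain a' b' where "a = Dup l a'" "b = Dup l b'"
      using a b assms(1) gverts_Suc_diff by blast
    then show ?thesis
      using a b assms(3) not_gadj_Dup_Dup unfolding pairwise_def by blast
  qed
  then show ?thesis
    using card_le_Suc0_iff_eq[of "S - gverts m l"] assms(2) by auto
qed

lemma pairwise_gadj_Suc_restrict:
  assumes "pairwise (gadj m (Suc l)) S"
  shows "pairwise (gadj m l) (S \<inter> gverts m l)"
  unfolding pairwise_def
proof (intro ballI impI)
  fix x y assume "x \<in> S \<inter> gverts m l" "y \<in> S \<inter> gverts m l" "x \<noteq> y"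
  then show "gadj m l x y"
    using assms gadj_Suc_iff_old[of x m l y] by (auto simp: pairwise_def)
qed

lemma card_gclique_le:
  "S \<subseteq> gverts m l \<Longrightarrow> finite S \<Longrightarrow> pairwise (gadj m l) S \<Longrightarrow> card S \<le> l + 2"
proof (induction l arbitrary: S)
  case 0
  then have "inj_on checkerboard S"
    unfolding inj_on_def pairwise_def using gadj_zero_checkerboard by blast
  then have "card S \<le> card (UNIV :: bool set)"
    by (rule card_inj_on_le) auto
  then show ?case by simp
next
  case (Suc l)
  have "card (S \<inter> gverts m l) \<le> l + 2"
  proof (rule Suc.IH)
    show "pairwise (gadj m l) (S \<inter> gverts m l)"
      using Suc.prems(3) by (rule pairwise_gadj_Suc_restrict)
  qed (use Suc.prems in auto)
  moreover have "card (S - gverts m l) \<le> 1"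
    using Suc.prems by (rule card_gverts_Suc_diff_le_1)
  moreover have "card S \<le> card (S \<inter> gverts m l) + card (S - gverts m l)"
    by (metis Int_Diff_Un card_Un_le)
  ultimately show ?case by simp
qed

definition kclique :: "nat \<Rightarrow> nat \<Rightarrow> node set \<Rightarrow> bool" where
  "kclique m l K \<longleftrightarrow> K \<subseteq> gverts m l \<and> finite K \<and> card K = l + 2 \<and> pairwise (gadj m l) K"

lemma kclique_insert_Dup:
  assumes "kclique m l A" "y \<in> A"
  shows "kclique m (Suc l) (insert (Dup l y) A)"
proof -
  have A: "A \<subseteq> gverts m l" "finite A" "card A = l + 2" "pairwise (gadj m l) A"
    using assms(1) unfolding kclique_def by auto
  have "Dup l y \<notin> A"
    using A(1) Dup_notin_gverts by blast
  moreover have Dup_adj: "gadj m (Suc l) (Dup l y) z" if "z \<in> A" for z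
  proof -
    have "z \<in> gverts m l" "y \<in> gverts m l" "z = y \<or> gadj m l y z"
      using that A assms(2) by (auto simp: pairwise_def)
    then show ?thesis using gadj_Suc_Dup_iff by blast
  qed
  moreover have "pairwise (gadj m (Suc l)) A"
    using A(4) by (rule pairwise_mono) (auto simp: gadj.simps(2))
  ultimately show ?thesis
    using A assms(2) Dup_adj gadj_sym by (auto simp: kclique_def pairwise_insert)
qed

lemma kclique_Suc_decomp:
  assumes "kclique m (Suc l) K"
  obtains K0 y where "kclique m l K0" "y \<in> K0" "K = insert (Dup l y) K0"
proof -
  let ?O = "K \<inter> gverts m l"
  have K: "K \<subseteq> gverts m (Suc l)" "finite K" "card K = l + 3" "pairwise (gadj m (Suc l)) K"
    using assms unfolding kclique_def by auto
  have O_clique: "pairwise (gadj m l) ?O"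
    using K(4) by (rule pairwise_gadj_Suc_restrict)
  have "card ?O \<le> l + 2"
    using K(2) O_clique by (intro card_gclique_le) auto
  moreover have "card (K - gverts m l) \<le> 1"
    using K(1,2,4) by (rule card_gverts_Suc_diff_le_1)
  moreover have "card K = card ?O + card (K - gverts m l)"
    using K(2) card_Un_disjoint[of ?O "K - gverts m l"] by (simp add: Int_Diff_Un Int_Diff_disjoint)
  ultimately have card_O: "card ?O = l + 2" and "card (K - gverts m l) = 1"
    using K(3) by auto
  then obtain d where d: "K - gverts m l = {d}"
    by (meson card_1_singletonE)
  then obtain y where y: "y \<in> gverts m l" "d = Dup l y"
    using K(1) gverts_Suc_diff by blast
  have K_eq: "K = insert d ?O"
    using d by blast
  have y_adj: "z = y \<or> gadj m l y z" if "z \<in> ?O" for z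
  proof -
    have "d \<in> K" "z \<in> K" "z \<noteq> d"
      using d that by auto
    then have "gadj m (Suc l) d z"
      using K(4) by (auto dest: pairwiseD)
    then show ?thesis using that y gadj_Suc_Dup_iff by blast
  qed
  \<comment> \<open>Otherwise y would extend the old part of K to an oversized clique of G_(l+2).\<close>
  have "y \<in> ?O"
  proof (rule ccontr)
    assume y_notin: "y \<notin> ?O"
    have "pairwise (gadj m l) (insert y ?O)"
      using O_clique y_adj by (auto simp: pairwise_insert intro: gadj_sym)
    then have "card (insert y ?O) \<le> l + 2"
      using y(1) K(2) by (intro card_gclique_le) auto
    then show False
      using y_notin card_O K(2) by simp
  qed
  moreover have "kclique m l ?O"
    using card_O O_clique K(2) unfolding kclique_def by auto
  ultimately show ?thesis
    using that K_eq y(2) by blast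
qed

definition clique_move :: "nat \<Rightarrow> nat \<Rightarrow> node \<Rightarrow> (node set \<times> node set) set" where
  "clique_move m l u =
     {(A, B). kclique m l A \<and> kclique m l B \<and> u \<in> A \<and> u \<in> B \<and> l + 1 \<le> card (A \<inter> B)}"

lemma clique_move_swap_Dup:
  assumes "kclique m l A" "y \<in> A" "z \<in> A" "u \<in> A"
  shows "(insert (Dup l y) A, insert (Dup l z) A) \<in> clique_move m (Suc l) u"
proof -
  have "card A \<le> card (insert (Dup l y) A \<inter> insert (Dup l z) A)"
    using assms(1) unfolding kclique_def by (intro card_mono) auto
  then have "Suc l + 1 \<le> card (insert (Dup l y) A \<inter> insert (Dup l z) A)"
    using assms(1) unfolding kclique_def by simp
  then show ?thesis
    using kclique_insert_Dup[OF assms(1,2)] kclique_insert_Dup[OF assms(1,3)] assms(4)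
    unfolding clique_move_def by blast
qed

lemma clique_move_lift:
  assumes "(A, B) \<in> clique_move m l u"
  obtains x where "x \<in> A" "x \<in> B" "(insert (Dup l x) A, insert (Dup l x) B) \<in> clique_move m (Suc l) u"
proof -
  have AB: "kclique m l A" "kclique m l B" "u \<in> A" "u \<in> B" "l + 1 \<le> card (A \<inter> B)"
    using assms unfolding clique_move_def by auto
  have "Dup l u \<notin> A \<inter> B" "finite (A \<inter> B)"
    using AB(1) Dup_notin_gverts unfolding kclique_def by auto
  moreover have "insert (Dup l u) A \<inter> insert (Dup l u) B = insert (Dup l u) (A \<inter> B)"
    by auto
  ultimately have "Suc l + 1 \<le> card (insert (Dup l u) A \<inter> insert (Dup l u) B)"
    using AB(5) by simp
  then have "(insert (Dup l u) A, insert (Dup l u) B) \<in> clique_move m (Suc l) u"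
    using kclique_insert_Dup[OF AB(1,3)] kclique_insert_Dup[OF AB(2,4)] AB(3,4)
    unfolding clique_move_def by blast
  then show ?thesis
    using that AB(3,4) by blast
qed

lemma clique_move_rtrancl_lift:
  assumes "(A, B) \<in> (clique_move m l u)\<^sup>*" "kclique m l A" "u \<in> A" "y \<in> A" "z \<in> B"
  shows "(insert (Dup l y) A, insert (Dup l z) B) \<in> (clique_move m (Suc l) u)\<^sup>*"
  using assms(1,5)
proof (induction arbitrary: z rule: rtrancl_induct)
  case base
  then show ?case
    using clique_move_swap_Dup[OF assms(2,4) _ assms(3)] by blast
next
  case (step B C)
  obtain x where x: "x \<in> B" "x \<in> C"
    and move: "(insert (Dup l x) B, insert (Dup l x) C) \<in> clique_move m (Suc l) u"
    using clique_move_lift[OF step.hyps(2)] by blast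
  have C: "kclique m l C" "u \<in> C"
    using step.hyps(2) unfolding clique_move_def by auto
  have "(insert (Dup l y) A, insert (Dup l x) B) \<in> (clique_move m (Suc l) u)\<^sup>*"
    using step.IH x(1) .
  also have "(insert (Dup l x) B, insert (Dup l x) C) \<in> (clique_move m (Suc l) u)\<^sup>*"
    using move by blast
  also have "(insert (Dup l x) C, insert (Dup l z) C) \<in> (clique_move m (Suc l) u)\<^sup>*"
    using clique_move_swap_Dup[OF C(1) x(2) step.prems C(2)] by blast
  finally show ?case .
qed

lemma kcliques_through_grid_node_connected:
  assumes "u \<in> gverts m 0"
  shows "kclique m l A \<Longrightarrow> kclique m l B \<Longrightarrow> u \<in> A \<Longrightarrow> u \<in> B \<Longrightarrow>
    (A, B) \<in> (clique_move m l u)\<^sup>*"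
proof (induction l arbitrary: A B)
  case 0
  then have "1 \<le> card (A \<inter> B)"
    unfolding kclique_def by (metis IntI One_nat_def Suc_leI card_gt_0_iff empty_iff finite_Int)
  then show ?case
    using 0 unfolding clique_move_def by auto
next
  case (Suc l)
  obtain A0 y where A0: "kclique m l A0" "y \<in> A0" "A = insert (Dup l y) A0"
    using kclique_Suc_decomp[OF Suc.prems(1)] .
  obtain B0 z where B0: "kclique m l B0" "z \<in> B0" "B = insert (Dup l z) B0"
    using kclique_Suc_decomp[OF Suc.prems(2)] .
  have "u \<noteq> Dup l x" for x
    using assms Dup_in_gverts_imp_less by blast
  then have "u \<in> A0" "u \<in> B0"
    using Suc.prems(3,4) A0(3) B0(3) by auto
  then show ?case
    using Suc.IH[OF A0(1) B0(1)] clique_move_rtrancl_lift A0 B0 by blast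
qed

lemma kclique_through_grid_edge:
  assumes "gadj m 0 u v"
  shows "\<exists>C. kclique m l C \<and> u \<in> C \<and> v \<in> C"
proof (induction l)
  case 0
  have "u \<noteq> v"
    using gadj_zero_checkerboard[OF assms] by auto
  then have "kclique m 0 {u, v}"
    using gadj_imp_gverts[OF assms] assms gadj_sym[OF assms]
    unfolding kclique_def by (auto simp: pairwise_insert)
  then show ?case by blast
next
  case (Suc l)
  then show ?case using kclique_insert_Dup by blast
qed

lemma kcliques_through_grid_edge_connected:
  assumes "gadj m 0 u v" "kclique m l K" "kclique m l K'" "u \<in> K" "v \<in> K'"
  shows "(K, K') \<in> (clique_move m l u \<union> clique_move m l v)\<^sup>*"
proof -
  obtain C where C: "kclique m l C" "u \<in> C" "v \<in> C"
    using kclique_through_grid_edge[OF assms(1)] by blast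
  have grid: "u \<in> gverts m 0" "v \<in> gverts m 0"
    using gadj_imp_gverts[OF assms(1)] by auto
  have "(K, C) \<in> (clique_move m l u)\<^sup>*"
    using kcliques_through_grid_node_connected[OF grid(1) assms(2) C(1) assms(4) C(2)] .
  moreover have "(C, K') \<in> (clique_move m l v)\<^sup>*"
    using kcliques_through_grid_node_connected[OF grid(2) C(1) assms(3) C(3) assms(5)] .
  ultimately show ?thesis
    by (meson in_rtrancl_UnI rtrancl_trans)
qed

lemma rtrancl_imp_chain_list:
  assumes "(a, b) \<in> R\<^sup>*" "P b" "\<And>x y. (x, y) \<in> R \<Longrightarrow> P x"
  shows "\<exists>xs. xs \<noteq> [] \<and> hd xs = a \<and> last xs = b \<and> (\<forall>x \<in> set xs. P x) \<and>
           (\<forall>i. Suc i < length xs \<longrightarrow> (xs ! i, xs ! Suc i) \<in> R)"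
  using assms(1)
proof (induction rule: converse_rtrancl_induct)
  case base
  then show ?case
    using assms(2) by (intro exI[of _ "[b]"]) auto
next
  case (step a a')
  then obtain xs where xs: "xs \<noteq> []" "hd xs = a'" "last xs = b" "\<forall>x \<in> set xs. P x"
    "\<forall>i. Suc i < length xs \<longrightarrow> (xs ! i, xs ! Suc i) \<in> R"
    by blast
  have "\<forall>i. Suc i < length (a # xs) \<longrightarrow> ((a # xs) ! i, (a # xs) ! Suc i) \<in> R"
  proof (intro allI impI)
    fix i assume "Suc i < length (a # xs)"
    then show "((a # xs) ! i, (a # xs) ! Suc i) \<in> R"
      using xs step.hyps(1) by (cases i) (auto simp: hd_conv_nth)
  qed
  then show ?case
    using xs step.hyps(1) assms(3) by (intro exI[of _ "a # xs"]) auto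
qed

lemma is_clique_iff_kclique: "2 \<le> k \<Longrightarrow> is_clique m k k C \<longleftrightarrow> kclique m (k - 2) C"
  unfolding is_clique_def kclique_def V_def adj_def pairwise_def by auto

lemma is_clique_subset_ball:
  assumes "is_clique m k r C" "x \<in> C" "x \<in> U" "1 \<le> T"
  shows "C \<subseteq> ball m k U T"
proof
  fix y assume y: "y \<in> C"
  have "(x, y) \<in> edge_rel m k ^^ 0 \<or> (x, y) \<in> edge_rel m k ^^ 1"
    using assms(1,2) y unfolding is_clique_def edge_rel_def by auto
  then show "y \<in> ball m k U T"
    using assms y unfolding ball_def is_clique_def by blast
qed

theorem mainTheorem18:
  fixes n m k :: nat and u v :: node and K K' :: "node set"
  assumes "k \<ge> 2" and "n = m ^ 2"
    and "u \<in> H2 m" and "v \<in> H2 m" and "adj m k u v"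
    and "is_clique m k k K" and "is_clique m k k K'"
    and "u \<in> K" and "v \<in> K'"
  shows "\<exists>Ks :: node set list. Ks \<noteq> [] \<and> hd Ks = K \<and> last Ks = K' \<and>
           (\<forall>C \<in> set Ks. is_clique m k k C \<and> C \<subseteq> ball m k {u, v} (k - 1)) \<and>
           (\<forall>i. Suc i < length Ks \<longrightarrow> card (Ks ! i \<inter> Ks ! Suc i) \<ge> k - 1)"
proof -
  define good where "good C \<longleftrightarrow> is_clique m k k C \<and> C \<subseteq> ball m k {u, v} (k - 1)" for C
  define R where "R = {(A, B). good A \<and> good B \<and> k - 1 \<le> card (A \<inter> B)}"
  have good_kclique: "good C" if "kclique m (k - 2) C" "x \<in> C" "x \<in> {u, v}" for C x
    using that assms(1) is_clique_subset_ball[of m k k C x "{u, v}" "k - 1"]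
    unfolding good_def is_clique_iff_kclique[OF assms(1)] by simp
  have "clique_move m (k - 2) u \<union> clique_move m (k - 2) v \<subseteq> R"
    using good_kclique assms(1) unfolding clique_move_def R_def by auto
  moreover have "gadj m 0 u v"
    using assms(3-5) gadj_grid_iff unfolding H2_def adj_def by blast
  ultimately have "(K, K') \<in> R\<^sup>*"
    using kcliques_through_grid_edge_connected[of m u v "k - 2" K K'] assms(6-9)
    unfolding is_clique_iff_kclique[OF assms(1)] by (meson rtrancl_mono subsetD)
  moreover have "good K'"
    using good_kclique assms(7,9) unfolding is_clique_iff_kclique[OF assms(1)] by blast
  ultimately obtain Ks where "Ks \<noteq> []" "hd Ks = K" "last Ks = K'" "\<forall>C \<in> set Ks. good C"
    "\<forall>i. Suc i < length Ks \<longrightarrow> (Ks ! i, Ks ! Suc i) \<in> R"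
    using rtrancl_imp_chain_list[of K K' R good] unfolding R_def by blast
  then show ?thesis
    unfolding R_def good_def by blast
qed

end
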